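(* Let $\alpha>0$, $\hbar>0$, $\sigma>0$ and let $n\geq 2$ be an integer. Define $$\psi_n(p)=N_G\,\Theta(-p)\,p^{n}e^{-\frac{p^{2}}{2\sigma^{2}}},\qquad N_G=\sqrt{\frac{2}{\sigma^{2n+1}\Gamma\left(n+\frac12\right)}},$$ where $\Theta$ is the Heaviside step function (so $\int_{\mathbb{R}}\psi_n^2\,dp=1$), and for $\tau\in\mathbb{R}$ let $$\mathcal{A}_n(\tau)=4\pi\int_{\mathbb{R}}dp\,\frac{\alpha^{4}}{p^{4}}\tau^{2}\,\psi_n(p)^{2}+4\pi\hbar^{2}\int_{\mathbb{R}}dp\,\left(\frac{d\psi_n(p)}{dp}\right)^{2}.$$ Then $\mathcal{A}_n(\tau)$ is finite for every $\tau$, attains its minimum over $\tau\in\mathbb{R}$ at $\tau=0$, and $$\mathcal{A}_n(0)=\frac{4\pi\hbar^{2}}{\sigma^{2}}\left(\frac{4n-1}{4n-2}\right)=4\pi(\Delta a)^{2},$$ where $(\Delta a)^2=\langle\hat a^2\rangle-\langle\hat a\rangle^2$ is the variance of the operator $\hat a=i\hbar\,\frac{d}{dp}$ in the state $\psi_n$, for which $\langle \hat a\rangle=\int\psi_n\, i\hbar\psi_n'\,dp=0$ and $\Delta a=\frac{\hbar}{\sigma}\sqrt{\frac{4n-1}{4n-2}}$.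
   Context: $\mathcal{A}_n(\tau)$ is the expectation value of the gauge-invariant area of 2-spheres in the Schwarzschild interior at relational time $\tau$ with clock operator $\hat T=\hat b$, evaluated on the Gaussian-type physical state $\psi_n(p_a)$; $\hat a$ is the areal-radius variable in momentum representation. *)

theory Defs
  imports "HOL-Analysis.Analysis"
begin

definition NG :: "real \<Rightarrow> nat \<Rightarrow> real" where
  "NG \<sigma> n = sqrt (2 / (\<sigma> ^ (2 * n + 1) * Gamma (real n + 1 / 2)))"

text \<open>Heaviside step function (value at 0 irrelevant here since p^n vanishes there).\<close>
definition heaviside :: "real \<Rightarrow> real" where
  "heaviside x = (if x > 0 then 1 else 0)"

definition psi :: "real \<Rightarrow> nat \<Rightarrow> real \<Rightarrow> real" where
  "psi \<sigma> n p = NG \<sigma> n * heaviside (- p) * p ^ n * exp (- (p ^ 2) / (2 * \<sigma> ^ 2))"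

text \<open>Expected area A_n(tau).  At p = 0 the factor alpha^4/p^4 is 0 by the HOL
  convention x/0 = 0; this is a single point and does not affect the integral.\<close>
definition area :: "real \<Rightarrow> real \<Rightarrow> real \<Rightarrow> nat \<Rightarrow> real \<Rightarrow> real" where
  "area \<alpha> hb \<sigma> n \<tau> =
     4 * pi * (\<integral>p. \<alpha> ^ 4 / p ^ 4 * \<tau> ^ 2 * (psi \<sigma> n p) ^ 2 \<partial>lborel)
   + 4 * pi * hb ^ 2 * (\<integral>p. (deriv (psi \<sigma> n) p) ^ 2 \<partial>lborel)"

definition expect_a :: "real \<Rightarrow> real \<Rightarrow> nat \<Rightarrow> complex" where
  "expect_a hb \<sigma> n =
     (\<integral>p. complex_of_real (psi \<sigma> n p) * (\<i> * complex_of_real hb * complex_of_real (deriv (psi \<sigma> n) p)) \<partial>lborel)"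

definition expect_a2 :: "real \<Rightarrow> real \<Rightarrow> nat \<Rightarrow> complex" where
  "expect_a2 hb \<sigma> n =
     (\<integral>p. complex_of_real (psi \<sigma> n p) * ((\<i> * complex_of_real hb) ^ 2 *
            complex_of_real (deriv (deriv (psi \<sigma> n)) p)) \<partial>lborel)"

definition variance_a :: "real \<Rightarrow> real \<Rightarrow> nat \<Rightarrow> complex" where
  "variance_a hb \<sigma> n = expect_a2 hb \<sigma> n - (expect_a hb \<sigma> n) ^ 2"

end

theory Submission
  imports Defs "HOL-Probability.Distributions"
begin

text \<open>
  Write psi_n = N_G phi_n with phi_n(p) = \<Theta>(-p) p^n exp(-p^2 / (2 \<sigma>^2)), the function
  \<open>half_gauss\<close>. Then phi_n' = n phi_(n-1) - phi_(n+1) / \<sigma>^2 (at p = 0 this needs n \<ge> 2) and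
  phi_j phi_k = \<Theta>(-p) p^(j+k) exp(-p^2 / \<sigma>^2), so every integral in the statement is a linear
  combination of the half-line Gaussian moments M_k = \<integral>_(p<0) p^k exp(-p^2 / \<sigma>^2) dp.
  These obey M_(k+2) = (k + 1) \<sigma>^2 / 2 M_k, and the normalisation reads N_G^2 M_(2n) = 1;
  with both, \<integral> psi'^2 = - \<integral> psi psi'' = (4n - 1) / ((4n - 2) \<sigma>^2) and \<integral> psi psi' = 0
  become algebra. The \<tau>-dependent part of A_n(\<tau>) is a nonnegative integral vanishing at \<tau> = 0.
\<close>

definition gauss_moment_density :: "real \<Rightarrow> nat \<Rightarrow> real \<Rightarrow> real" where
  "gauss_moment_density \<sigma> k p = indicator {..<0} p * p ^ k * exp (- (p ^ 2) / \<sigma> ^ 2)"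

definition gauss_moment :: "real \<Rightarrow> nat \<Rightarrow> real" where
  "gauss_moment \<sigma> k = (\<integral>p. gauss_moment_density \<sigma> k p \<partial>lborel)"

lemma borel_measurable_gauss_moment_density [measurable]:
  "gauss_moment_density \<sigma> k \<in> borel_measurable borel"
  unfolding gauss_moment_density_def by measurable

lemma has_bochner_integral_gauss_moment_density_rescale:
  assumes "\<sigma> > 0"
    and "has_bochner_integral lborel (\<lambda>x::real. indicator {0..} x *\<^sub>R (exp (- x\<^sup>2) * x ^ k)) I"
  shows "has_bochner_integral lborel (gauss_moment_density \<sigma> k) (\<sigma> * (- \<sigma>) ^ k * I)"
proof -
  have "AE x in lborel. (- \<sigma>) ^ k * (indicator {0..} x *\<^sub>R (exp (- x\<^sup>2) * x ^ k))
                        = gauss_moment_density \<sigma> k (0 + - \<sigma> * x)"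
    using AE_lborel_singleton[of 0]
  proof eventually_elim
    case (elim x)
    have "(\<sigma> * x)\<^sup>2 / \<sigma>\<^sup>2 = x\<^sup>2"
      using assms(1) by (simp add: power_mult_distrib)
    moreover have "(- (\<sigma> * x)) ^ k = (- \<sigma>) ^ k * x ^ k"
      by (metis minus_mult_left power_mult_distrib)
    ultimately show ?case
      using assms(1) elim by (auto simp: gauss_moment_density_def indicator_def zero_less_mult_iff)
  qed
  then have transformed:
      "has_bochner_integral lborel (\<lambda>x. gauss_moment_density \<sigma> k (0 + - \<sigma> * x)) ((- \<sigma>) ^ k * I)"
    using has_bochner_integral_mult_right[OF assms(2), of "(- \<sigma>) ^ k"]
    by (subst (asm) has_bochner_integral_cong_AE) auto
  have scale: "(\<sigma> * (- \<sigma>) ^ k * I) /\<^sub>R \<bar>- \<sigma>\<bar> = (- \<sigma>) ^ k * I"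
    using assms(1) by simp
  have "has_bochner_integral lborel (gauss_moment_density \<sigma> k) (\<sigma> * (- \<sigma>) ^ k * I)
      \<longleftrightarrow> has_bochner_integral lborel (\<lambda>x. gauss_moment_density \<sigma> k (0 + - \<sigma> * x))
            ((\<sigma> * (- \<sigma>) ^ k * I) /\<^sub>R \<bar>- \<sigma>\<bar>)"
    using assms(1) by (intro lborel_has_bochner_integral_real_affine_iff) simp
  then show ?thesis
    unfolding scale using transformed by blast
qed

lemma has_bochner_integral_gauss_moment_even:
  assumes "\<sigma> > 0"
  shows "has_bochner_integral lborel (gauss_moment_density \<sigma> (2 * k))
           (\<sigma> ^ (2 * k + 1) * (sqrt pi / 2) * (fact (2 * k) / (2 ^ (2 * k) * fact k)))"
proof -
  have "\<sigma> * (- \<sigma>) ^ (2 * k) * (sqrt pi / 2 * (fact (2 * k) / (2 ^ (2 * k) * fact k)))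
      = \<sigma> ^ (2 * k + 1) * (sqrt pi / 2) * (fact (2 * k) / (2 ^ (2 * k) * fact k))"
    by (simp add: mult_ac)
  then show ?thesis
    using has_bochner_integral_gauss_moment_density_rescale[OF assms gaussian_moment_even_pos[of k]]
    by (simp only:)
qed

lemma has_bochner_integral_gauss_moment_odd:
  assumes "\<sigma> > 0"
  shows "has_bochner_integral lborel (gauss_moment_density \<sigma> (2 * k + 1))
           (- (\<sigma> ^ (2 * k + 2) * fact k / 2))"
proof -
  have "\<sigma> * (- \<sigma>) ^ (2 * k + 1) * (fact k / 2) = - (\<sigma> ^ (2 * k + 2) * fact k / 2)"
    by (simp add: mult_ac)
  then show ?thesis
    using has_bochner_integral_gauss_moment_density_rescale[OF assms gaussian_moment_odd_pos[of k]]
    by (simp only:)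
qed

lemma integrable_gauss_moment_density:
  assumes "\<sigma> > 0"
  shows "integrable lborel (gauss_moment_density \<sigma> k)"
proof (cases "even k")
  case True
  then obtain j where "k = 2 * j" by blast
  then show ?thesis
    using integrable.intros[OF has_bochner_integral_gauss_moment_even[OF assms]] by simp
next
  case False
  then obtain j where "k = 2 * j + 1" using oddE by blast
  then show ?thesis
    using integrable.intros[OF has_bochner_integral_gauss_moment_odd[OF assms]] by simp
qed

lemma has_bochner_integral_gauss_moment:
  "\<sigma> > 0 \<Longrightarrow> has_bochner_integral lborel (gauss_moment_density \<sigma> k) (gauss_moment \<sigma> k)"
  by (simp add: has_bochner_integral_iff integrable_gauss_moment_density gauss_moment_def)

lemma gauss_moment_even_Suc:
  assumes "\<sigma> > 0"
  shows "gauss_moment \<sigma> (2 * (j + 1)) = (2 * real j + 1) * \<sigma>\<^sup>2 / 2 * gauss_moment \<sigma> (2 * j)"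
proof -
  have cancel: "\<sigma>\<^sup>2 * S * (sqrt pi / 2) * (2 * x * (2 * real j + 1) * F / (4 * P * (x * f)))
      = (2 * real j + 1) * \<sigma>\<^sup>2 / 2 * (S * (sqrt pi / 2) * (F / (P * f)))"
    if "x > 0" "f > 0" "P > 0" for x S F f P :: real
    using that by (simp add: field_simps)
  have "fact (2 * (j + 1)) = 2 * (real j + 1) * (2 * real j + 1) * fact (2 * j)"
    by (simp add: numeral_eq_Suc algebra_simps)
  moreover have "fact (j + 1) = (real j + 1) * fact j"
    by simp
  moreover have "\<sigma> ^ (2 * (j + 1) + 1) = \<sigma>\<^sup>2 * \<sigma> ^ (2 * j + 1)" "(2::real) ^ (2 * (j + 1)) = 4 * 2 ^ (2 * j)"
    by (simp_all add: power_add power2_eq_square)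
  ultimately show ?thesis
    using has_bochner_integral_gauss_moment_even[OF assms, of j]
      has_bochner_integral_gauss_moment_even[OF assms, of "j + 1"]
    unfolding gauss_moment_def has_bochner_integral_iff
    by (simp only:) (rule cancel; simp)
qed

lemma gauss_moment_odd_Suc:
  assumes "\<sigma> > 0"
  shows "gauss_moment \<sigma> (2 * (j + 1) + 1) = (2 * real j + 2) * \<sigma>\<^sup>2 / 2 * gauss_moment \<sigma> (2 * j + 1)"
  using has_bochner_integral_gauss_moment_odd[OF assms, of j]
    has_bochner_integral_gauss_moment_odd[OF assms, of "j + 1"]
  unfolding gauss_moment_def has_bochner_integral_iff
  by (simp add: power_add power2_eq_square field_simps)

lemma gauss_moment_Suc_Suc:
  assumes "\<sigma> > 0"
  shows "gauss_moment \<sigma> (k + 2) = (real k + 1) * \<sigma>\<^sup>2 / 2 * gauss_moment \<sigma> k"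
proof (cases "even k")
  case True
  then obtain j where "k = 2 * j" by blast
  then show ?thesis
    using gauss_moment_even_Suc[OF assms, of j] by (simp add: algebra_simps)
next
  case False
  then obtain j where "k = 2 * j + 1" using oddE by blast
  then show ?thesis
    using gauss_moment_odd_Suc[OF assms, of j] by (simp add: algebra_simps)
qed

lemma gauss_moment_even_Gamma:
  assumes "\<sigma> > 0"
  shows "gauss_moment \<sigma> (2 * k) = \<sigma> ^ (2 * k + 1) * Gamma (real k + 1 / 2) / 2"
proof (induction k)
  case 0
  then show ?case
    using has_bochner_integral_gauss_moment_even[OF assms, of 0]
    by (simp add: gauss_moment_def has_bochner_integral_iff Gamma_one_half_real)
next
  case (Suc k)
  have "gauss_moment \<sigma> (2 * Suc k) = (2 * real k + 1) * \<sigma>\<^sup>2 / 2 * gauss_moment \<sigma> (2 * k)"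
    using gauss_moment_Suc_Suc[OF assms, of "2 * k"] by simp
  also have "\<dots> = \<sigma> ^ (2 * Suc k + 1) * ((real k + 1 / 2) * Gamma (real k + 1 / 2)) / 2"
    unfolding Suc.IH by (simp add: power_add power2_eq_square field_simps)
  also have "(real k + 1 / 2) * Gamma (real k + 1 / 2) = Gamma (real k + 1 / 2 + 1)"
    by (rule Gamma_plus1[symmetric]) (auto dest: nonpos_Ints_nonpos)
  also have "real k + 1 / 2 + 1 = real (Suc k) + 1 / 2"
    by simp
  finally show ?case .
qed

definition half_gauss :: "real \<Rightarrow> nat \<Rightarrow> real \<Rightarrow> real" where
  "half_gauss \<sigma> k p = indicator {..<0} p * p ^ k * exp (- (p ^ 2) / (2 * \<sigma> ^ 2))"

lemma psi_eq_half_gauss: "psi \<sigma> n p = NG \<sigma> n * half_gauss \<sigma> n p"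
  by (simp add: psi_def half_gauss_def heaviside_def indicator_def)

lemma half_gauss_mult: "half_gauss \<sigma> j p * half_gauss \<sigma> k p = gauss_moment_density \<sigma> (j + k) p"
proof -
  have "exp (- (p ^ 2) / (2 * \<sigma> ^ 2)) * exp (- (p ^ 2) / (2 * \<sigma> ^ 2)) = exp (- (p ^ 2) / \<sigma> ^ 2)"
    by (simp flip: exp_add)
  then show ?thesis
    by (simp add: half_gauss_def gauss_moment_density_def indicator_def power_add)
qed

lemma abs_half_gauss_le: "\<bar>half_gauss \<sigma> k p\<bar> \<le> \<bar>p\<bar> ^ k"
proof -
  have "exp (- (p ^ 2) / (2 * \<sigma> ^ 2)) \<le> 1"
    by (simp add: divide_nonneg_nonneg)
  then show ?thesis
    by (auto simp: half_gauss_def indicator_def abs_mult power_abs intro: mult_left_le)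
qed

lemma half_gauss_tendsto_0:
  assumes "k > 0"
  shows "(half_gauss \<sigma> k \<longlongrightarrow> 0) (at 0)"
proof (rule Lim_null_comparison)
  show "\<forall>\<^sub>F p in at 0. norm (half_gauss \<sigma> k p) \<le> \<bar>p\<bar> ^ k"
    by (simp add: abs_half_gauss_le)
  have "((\<lambda>p::real. \<bar>p\<bar> ^ k) \<longlongrightarrow> \<bar>0\<bar> ^ k) (at 0)"
    by (intro tendsto_intros)
  also have "\<bar>0::real\<bar> ^ k = 0"
    using assms by simp
  finally show "((\<lambda>p::real. \<bar>p\<bar> ^ k) \<longlongrightarrow> 0) (at 0)" .
qed

lemma has_real_derivative_half_gauss:
  assumes "\<sigma> \<noteq> 0" and "p \<noteq> 0 \<or> 2 \<le> k"
  shows "(half_gauss \<sigma> k has_real_derivative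
           (real k * half_gauss \<sigma> (k - 1) p - half_gauss \<sigma> (k + 1) p / \<sigma>\<^sup>2)) (at p)"
proof -
  consider "p < 0" | "p > 0" | "p = 0" "2 \<le> k"
    using assms(2) by linarith
  then show ?thesis
  proof cases
    case 1
    let ?E = "\<lambda>q. exp (- (q ^ 2) / (2 * \<sigma> ^ 2))"
    have "((\<lambda>q. q ^ k * ?E q) has_real_derivative
            real k * (p ^ (k - 1) * ?E p) - p ^ (k + 1) * ?E p / \<sigma>\<^sup>2) (at p)"
      using assms(1) by (auto intro!: derivative_eq_intros simp: field_simps power2_eq_square)
    moreover have "real k * (p ^ (k - 1) * ?E p) - p ^ (k + 1) * ?E p / \<sigma>\<^sup>2
        = real k * half_gauss \<sigma> (k - 1) p - half_gauss \<sigma> (k + 1) p / \<sigma>\<^sup>2"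
      using 1 by (simp add: half_gauss_def)
    ultimately have "((\<lambda>q. q ^ k * ?E q) has_real_derivative
        real k * half_gauss \<sigma> (k - 1) p - half_gauss \<sigma> (k + 1) p / \<sigma>\<^sup>2) (at p)"
      by (rule DERIV_cong)
    then show ?thesis
      by (rule has_field_derivative_transform_within_open[of _ _ _ "{..<0}"])
         (use 1 in \<open>auto simp: half_gauss_def\<close>)
  next
    case 2
    show ?thesis
      by (rule has_field_derivative_transform_within_open[of "\<lambda>_. 0" _ _ "{0<..}"])
         (use 2 in \<open>auto simp: half_gauss_def\<close>)
  next
    case 3
    \<comment> \<open>For \<open>k = 1\<close> the one-sided derivatives at 0 would be 1 and 0.\<close>
    have "((\<lambda>h. (half_gauss \<sigma> k (0 + h) - half_gauss \<sigma> k 0) / h) \<longlongrightarrow> 0) (at 0)"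
    proof (rule Lim_transform_eventually[OF half_gauss_tendsto_0])
      show "\<forall>\<^sub>F h in at 0. half_gauss \<sigma> (k - 1) h = (half_gauss \<sigma> k (0 + h) - half_gauss \<sigma> k 0) / h"
        unfolding eventually_at_filter
        using 3 by (auto simp: half_gauss_def power_eq_if)
    qed (use 3 in simp)
    then show ?thesis
      using 3 by (simp add: DERIV_def half_gauss_def)
  qed
qed

lemma has_real_derivative_psi:
  assumes "\<sigma> \<noteq> 0" and "2 \<le> n"
  shows "(psi \<sigma> n has_real_derivative
           NG \<sigma> n * (real n * half_gauss \<sigma> (n - 1) p - half_gauss \<sigma> (n + 1) p / \<sigma>\<^sup>2)) (at p)"
proof -
  have "psi \<sigma> n = (\<lambda>p. NG \<sigma> n * half_gauss \<sigma> n p)"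
    by (simp add: psi_eq_half_gauss fun_eq_iff)
  then show ?thesis
    using assms by (simp only:) (intro DERIV_cmult has_real_derivative_half_gauss; auto)
qed

lemma deriv_psi:
  assumes "\<sigma> \<noteq> 0" and "2 \<le> n"
  shows "deriv (psi \<sigma> n) = (\<lambda>p. NG \<sigma> n * (real n * half_gauss \<sigma> (n - 1) p - half_gauss \<sigma> (n + 1) p / \<sigma>\<^sup>2))"
  using DERIV_imp_deriv[OF has_real_derivative_psi[OF assms]] by (simp add: fun_eq_iff)

lemma deriv_deriv_psi:
  assumes "\<sigma> \<noteq> 0" and "2 \<le> n" and "p \<noteq> 0"
  shows "deriv (deriv (psi \<sigma> n)) p =
           NG \<sigma> n * (real n * (real (n - 1) * half_gauss \<sigma> (n - 2) p - half_gauss \<sigma> n p / \<sigma>\<^sup>2)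
                     - (real (n + 1) * half_gauss \<sigma> n p - half_gauss \<sigma> (n + 2) p / \<sigma>\<^sup>2) / \<sigma>\<^sup>2)"
proof -
  have "(half_gauss \<sigma> (n - 1) has_real_derivative
          real (n - 1) * half_gauss \<sigma> (n - 2) p - half_gauss \<sigma> n p / \<sigma>\<^sup>2) (at p)"
    using has_real_derivative_half_gauss[of \<sigma> p "n - 1"] assms by (simp add: numeral_2_eq_2)
  moreover have "(half_gauss \<sigma> (n + 1) has_real_derivative
          real (n + 1) * half_gauss \<sigma> n p - half_gauss \<sigma> (n + 2) p / \<sigma>\<^sup>2) (at p)"
    using has_real_derivative_half_gauss[of \<sigma> p "n + 1"] assms by simp
  ultimately show ?thesis
    unfolding deriv_psi[OF assms(1,2)]
    by (intro DERIV_imp_deriv DERIV_cmult DERIV_diff DERIV_cdivide)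
qed

lemma has_bochner_integral_half_gauss_mult:
  assumes "\<sigma> > 0" and "i + j = m"
  shows "has_bochner_integral lborel (\<lambda>p. half_gauss \<sigma> i p * half_gauss \<sigma> j p) (gauss_moment \<sigma> m)"
  unfolding half_gauss_mult assms(2) using assms(1) by (rule has_bochner_integral_gauss_moment)

lemma NG_sq_mult_gauss_moment:
  assumes "\<sigma> > 0"
  shows "NG \<sigma> n ^ 2 * gauss_moment \<sigma> (2 * n) = 1"
proof -
  have "Gamma (real n + 1 / 2) \<noteq> 0"
    using Gamma_real_pos[of "real n + 1 / 2"] by linarith
  with assms show ?thesis
    by (simp add: NG_def gauss_moment_even_Gamma[OF assms])
qed

lemma has_bochner_integral_psi_square:
  assumes "\<sigma> > 0"
  shows "has_bochner_integral lborel (\<lambda>p. psi \<sigma> n p ^ 2) 1"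
proof -
  have "has_bochner_integral lborel (\<lambda>p. NG \<sigma> n ^ 2 * (half_gauss \<sigma> n p * half_gauss \<sigma> n p))
          (NG \<sigma> n ^ 2 * gauss_moment \<sigma> (2 * n))"
    using assms by (intro has_bochner_integral_mult_right has_bochner_integral_half_gauss_mult) auto
  moreover have "(\<lambda>p. psi \<sigma> n p ^ 2) = (\<lambda>p. NG \<sigma> n ^ 2 * (half_gauss \<sigma> n p * half_gauss \<sigma> n p))"
    by (simp add: fun_eq_iff psi_eq_half_gauss power2_eq_square)
  ultimately show ?thesis
    unfolding NG_sq_mult_gauss_moment[OF assms] by simp
qed

lemma NG_sq_mult_gauss_moment_combination:
  assumes "\<sigma> > 0" and "1 \<le> n"
  shows "NG \<sigma> n ^ 2 * (a * gauss_moment \<sigma> (2 * n - 2) + b * gauss_moment \<sigma> (2 * n)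
                        + c * gauss_moment \<sigma> (2 * n + 2))
         = a * (2 / ((2 * real n - 1) * \<sigma>\<^sup>2)) + b + c * ((2 * real n + 1) * \<sigma>\<^sup>2 / 2)"
proof -
  let ?N = "NG \<sigma> n ^ 2" and ?M = "gauss_moment \<sigma>"
  have norm: "?N * ?M (2 * n) = 1"
    by (rule NG_sq_mult_gauss_moment[OF assms(1)])
  have "2 * n - 2 + 2 = 2 * n"
    using assms(2) by simp
  then have rec: "?M (2 * n) = (2 * real n - 1) * \<sigma>\<^sup>2 / 2 * ?M (2 * n - 2)"
    using gauss_moment_Suc_Suc[OF assms(1), of "2 * n - 2"] assms(2) by (simp add: of_nat_diff)
  have "(2 * real n - 1) * \<sigma>\<^sup>2 \<noteq> 0"
    using assms by simp
  then have "?N * ?M (2 * n - 2) = ?N * ?M (2 * n) * (2 / ((2 * real n - 1) * \<sigma>\<^sup>2))"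
    unfolding rec by simp
  then have below: "?N * ?M (2 * n - 2) = 2 / ((2 * real n - 1) * \<sigma>\<^sup>2)"
    unfolding norm by simp
  have rec': "?M (2 * n + 2) = (2 * real n + 1) * \<sigma>\<^sup>2 / 2 * ?M (2 * n)"
    using gauss_moment_Suc_Suc[OF assms(1), of "2 * n"] by simp
  have above: "?N * ?M (2 * n + 2) = (2 * real n + 1) * \<sigma>\<^sup>2 / 2"
    unfolding rec' mult.left_commute[of ?N] norm by simp
  show ?thesis
    by (simp only: distrib_left mult.left_commute[of ?N] norm below above mult_1_right)
qed


lemma deriv_psi_square:
  assumes "\<sigma> \<noteq> 0" and "2 \<le> n"
  shows "deriv (psi \<sigma> n) p ^ 2 = NG \<sigma> n ^ 2 *
           (real n ^ 2 * (half_gauss \<sigma> (n - 1) p * half_gauss \<sigma> (n - 1) p)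
            + - 2 * real n / \<sigma>\<^sup>2 * (half_gauss \<sigma> (n - 1) p * half_gauss \<sigma> (n + 1) p)
            + 1 / \<sigma> ^ 4 * (half_gauss \<sigma> (n + 1) p * half_gauss \<sigma> (n + 1) p))"
  using assms(1) by (simp add: deriv_psi[OF assms] power2_eq_square power4_eq_xxxx field_simps)

lemma psi_mult_deriv_psi:
  assumes "\<sigma> \<noteq> 0" and "2 \<le> n"
  shows "psi \<sigma> n p * deriv (psi \<sigma> n) p = NG \<sigma> n ^ 2 *
           (real n * (half_gauss \<sigma> n p * half_gauss \<sigma> (n - 1) p)
            + - 1 / \<sigma>\<^sup>2 * (half_gauss \<sigma> n p * half_gauss \<sigma> (n + 1) p))"
  using assms(1) by (simp add: deriv_psi[OF assms] psi_eq_half_gauss power2_eq_square field_simps)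

lemma psi_mult_deriv_deriv_psi:
  assumes "\<sigma> \<noteq> 0" and "2 \<le> n"
  shows "psi \<sigma> n p * deriv (deriv (psi \<sigma> n)) p = NG \<sigma> n ^ 2 *
           (real n * (real n - 1) * (half_gauss \<sigma> n p * half_gauss \<sigma> (n - 2) p)
            + - (2 * real n + 1) / \<sigma>\<^sup>2 * (half_gauss \<sigma> n p * half_gauss \<sigma> n p)
            + 1 / \<sigma> ^ 4 * (half_gauss \<sigma> n p * half_gauss \<sigma> (n + 2) p))"
proof (cases "p = 0")
  case True
  then show ?thesis
    by (simp add: psi_eq_half_gauss half_gauss_def)
next
  case False
  have "real (n - 1) = real n - 1"
    using assms(2) by simp
  with assms(1) show ?thesis
    by (simp add: deriv_deriv_psi[OF assms False] psi_eq_half_gauss power2_eq_square power4_eq_xxxx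
        field_simps)
qed

lemma has_bochner_integral_deriv_psi_square:
  assumes "\<sigma> > 0" and "2 \<le> n"
  shows "has_bochner_integral lborel (\<lambda>p. deriv (psi \<sigma> n) p ^ 2)
           ((4 * real n - 1) / (4 * real n - 2) / \<sigma>\<^sup>2)"
proof -
  let ?M = "gauss_moment \<sigma>"
  have "has_bochner_integral lborel (\<lambda>p. deriv (psi \<sigma> n) p ^ 2)
          (NG \<sigma> n ^ 2 * (real n ^ 2 * ?M (2 * n - 2) + - 2 * real n / \<sigma>\<^sup>2 * ?M (2 * n)
                         + 1 / \<sigma> ^ 4 * ?M (2 * n + 2)))"
    unfolding deriv_psi_square[OF less_imp_neq[OF assms(1), symmetric] assms(2)]
    using assms
    by (intro has_bochner_integral_mult_right has_bochner_integral_add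
        has_bochner_integral_half_gauss_mult) auto
  also have "NG \<sigma> n ^ 2 * (real n ^ 2 * ?M (2 * n - 2) + - 2 * real n / \<sigma>\<^sup>2 * ?M (2 * n)
                         + 1 / \<sigma> ^ 4 * ?M (2 * n + 2))
      = real n ^ 2 * (2 / ((2 * real n - 1) * \<sigma>\<^sup>2)) + - 2 * real n / \<sigma>\<^sup>2
        + 1 / \<sigma> ^ 4 * ((2 * real n + 1) * \<sigma>\<^sup>2 / 2)"
    using assms by (intro NG_sq_mult_gauss_moment_combination) auto
  also have "\<dots> = (4 * real n - 1) / (4 * real n - 2) / \<sigma>\<^sup>2"
  proof -
    \<comment> \<open>In terms of \<open>y = 2n - 1\<close> all denominators are products of atoms, which \<open>field_simps\<close> clears.\<close>
    define y where "y = 2 * real n - 1"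
    have y: "y > 0" "real n = (y + 1) / 2"
      using assms(2) by (auto simp: y_def)
    show ?thesis
      unfolding y(2) using y(1) assms(1) by (simp add: field_simps power2_eq_square power4_eq_xxxx)
  qed
  finally show ?thesis .
qed

lemma has_bochner_integral_psi_mult_deriv_psi:
  assumes "\<sigma> > 0" and "2 \<le> n"
  shows "has_bochner_integral lborel (\<lambda>p. psi \<sigma> n p * deriv (psi \<sigma> n) p) 0"
proof -
  let ?M = "gauss_moment \<sigma>"
  have "has_bochner_integral lborel (\<lambda>p. psi \<sigma> n p * deriv (psi \<sigma> n) p)
          (NG \<sigma> n ^ 2 * (real n * ?M (2 * n - 1) + - 1 / \<sigma>\<^sup>2 * ?M (2 * n + 1)))"
    unfolding psi_mult_deriv_psi[OF less_imp_neq[OF assms(1), symmetric] assms(2)]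
    using assms
    by (intro has_bochner_integral_mult_right has_bochner_integral_add
        has_bochner_integral_half_gauss_mult) auto
  also have "?M (2 * n + 1) = real n * \<sigma>\<^sup>2 * ?M (2 * n - 1)"
  proof -
    have "2 * n - 1 + 2 = 2 * n + 1"
      using assms(2) by simp
    then show ?thesis
      using gauss_moment_Suc_Suc[OF assms(1), of "2 * n - 1"] assms(2) by (simp add: of_nat_diff)
  qed
  finally show ?thesis
    using assms(1) by simp
qed

lemma has_bochner_integral_psi_mult_deriv_deriv_psi:
  assumes "\<sigma> > 0" and "2 \<le> n"
  shows "has_bochner_integral lborel (\<lambda>p. psi \<sigma> n p * deriv (deriv (psi \<sigma> n)) p)
           (- ((4 * real n - 1) / (4 * real n - 2) / \<sigma>\<^sup>2))"
proof -
  let ?M = "gauss_moment \<sigma>"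
  have "has_bochner_integral lborel (\<lambda>p. psi \<sigma> n p * deriv (deriv (psi \<sigma> n)) p)
          (NG \<sigma> n ^ 2 * (real n * (real n - 1) * ?M (2 * n - 2) + - (2 * real n + 1) / \<sigma>\<^sup>2 * ?M (2 * n)
                         + 1 / \<sigma> ^ 4 * ?M (2 * n + 2)))"
    unfolding psi_mult_deriv_deriv_psi[OF less_imp_neq[OF assms(1), symmetric] assms(2)]
    using assms
    by (intro has_bochner_integral_mult_right has_bochner_integral_add
        has_bochner_integral_half_gauss_mult) auto
  also have "NG \<sigma> n ^ 2 * (real n * (real n - 1) * ?M (2 * n - 2) + - (2 * real n + 1) / \<sigma>\<^sup>2 * ?M (2 * n)
                         + 1 / \<sigma> ^ 4 * ?M (2 * n + 2))
      = real n * (real n - 1) * (2 / ((2 * real n - 1) * \<sigma>\<^sup>2)) + - (2 * real n + 1) / \<sigma>\<^sup>2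
        + 1 / \<sigma> ^ 4 * ((2 * real n + 1) * \<sigma>\<^sup>2 / 2)"
    using assms by (intro NG_sq_mult_gauss_moment_combination) auto
  also have "\<dots> = - ((4 * real n - 1) / (4 * real n - 2) / \<sigma>\<^sup>2)"
  proof -
    define y where "y = 2 * real n - 1"
    have y: "y > 0" "real n = (y + 1) / 2"
      using assms(2) by (auto simp: y_def)
    show ?thesis
      unfolding y(2) using y(1) assms(1) by (simp add: field_simps power2_eq_square power4_eq_xxxx)
  qed
  finally show ?thesis .
qed

lemma integrable_psi_square_div_p4:
  assumes "\<sigma> > 0" and "2 \<le> n"
  shows "integrable lborel (\<lambda>p. \<alpha> ^ 4 / p ^ 4 * \<tau> ^ 2 * psi \<sigma> n p ^ 2)"
proof -
  have "\<alpha> ^ 4 / p ^ 4 * \<tau> ^ 2 * psi \<sigma> n p ^ 2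
      = \<alpha> ^ 4 * \<tau> ^ 2 * NG \<sigma> n ^ 2 * (half_gauss \<sigma> (n - 2) p * half_gauss \<sigma> (n - 2) p)" for p
  proof -
    have "p ^ n = p ^ (n - 2) * p\<^sup>2"
      using assms(2) by (metis le_add_diff_inverse2 power_add)
    then show ?thesis
      by (cases "p = 0") (simp_all add: psi_eq_half_gauss half_gauss_def power2_eq_square power4_eq_xxxx field_simps)
  qed
  moreover have "integrable lborel (\<lambda>p. \<alpha> ^ 4 * \<tau> ^ 2 * NG \<sigma> n ^ 2 * (half_gauss \<sigma> (n - 2) p * half_gauss \<sigma> (n - 2) p))"
    using assms(1)
    by (intro integrable_mult_right integrable.intros[OF has_bochner_integral_half_gauss_mult]) simp_all
  ultimately show ?thesis
    by simp
qed

lemma area_0_le: "area \<alpha> hb \<sigma> n 0 \<le> area \<alpha> hb \<sigma> n \<tau>"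
proof -
  \<comment> \<open>No integrability is needed: a Bochner integral of a nonnegative function is nonnegative.\<close>
  have "0 \<le> (\<integral>p. \<alpha> ^ 4 / p ^ 4 * \<tau> ^ 2 * psi \<sigma> n p ^ 2 \<partial>lborel)"
    by (rule Bochner_Integration.integral_nonneg) simp
  then show ?thesis
    by (simp add: area_def)
qed

lemma area_0:
  assumes "\<sigma> > 0" and "2 \<le> n"
  shows "area \<alpha> hb \<sigma> n 0 = 4 * pi * hb ^ 2 / \<sigma> ^ 2 * ((4 * real n - 1) / (4 * real n - 2))"
  using has_bochner_integral_deriv_psi_square[OF assms]
  by (simp add: area_def has_bochner_integral_iff)

lemma expect_a_eq_0:
  assumes "\<sigma> > 0" and "2 \<le> n"
  shows "expect_a hb \<sigma> n = 0"
proof -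
  have "expect_a hb \<sigma> n = (\<integral>p. complex_of_real (psi \<sigma> n p * deriv (psi \<sigma> n) p) * (\<i> * hb) \<partial>lborel)"
    unfolding expect_a_def by (simp add: mult_ac)
  also have "\<dots> = 0"
    using has_bochner_integral_psi_mult_deriv_psi[OF assms]
    by (simp only: integral_mult_left_zero integral_complex_of_real has_bochner_integral_integral_eq) simp
  finally show ?thesis .
qed

lemma expect_a2_eq:
  assumes "\<sigma> > 0" and "2 \<le> n"
  shows "expect_a2 hb \<sigma> n = complex_of_real (hb ^ 2 * ((4 * real n - 1) / (4 * real n - 2) / \<sigma>\<^sup>2))"
proof -
  have "expect_a2 hb \<sigma> n
      = (\<integral>p. complex_of_real (psi \<sigma> n p * deriv (deriv (psi \<sigma> n)) p) * (\<i> * hb) ^ 2 \<partial>lborel)"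
    unfolding expect_a2_def by (simp add: mult_ac)
  also have "\<dots> = complex_of_real (- ((4 * real n - 1) / (4 * real n - 2) / \<sigma>\<^sup>2)) * (\<i> * hb) ^ 2"
    using has_bochner_integral_psi_mult_deriv_deriv_psi[OF assms]
    by (simp only: integral_mult_left_zero integral_complex_of_real has_bochner_integral_integral_eq)
  also have "\<dots> = complex_of_real (hb ^ 2 * ((4 * real n - 1) / (4 * real n - 2) / \<sigma>\<^sup>2))"
    by (simp add: power_mult_distrib)
  finally show ?thesis .
qed

lemma variance_a_eq:
  assumes "\<sigma> > 0" and "2 \<le> n"
  shows "variance_a hb \<sigma> n = complex_of_real (hb ^ 2 / \<sigma> ^ 2 * ((4 * real n - 1) / (4 * real n - 2)))"
  unfolding variance_a_def expect_a_eq_0[OF assms] expect_a2_eq[OF assms] by simp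

theorem mainTheorem3:
  fixes \<alpha> hb \<sigma> :: real and n :: nat
  assumes "\<alpha> > 0" and "hb > 0" and "\<sigma> > 0" and "n \<ge> 2"
  shows "((\<integral>p. (psi \<sigma> n p) ^ 2 \<partial>lborel) = 1) \<and>
         (\<forall>\<tau>::real. integrable lborel (\<lambda>p. \<alpha> ^ 4 / p ^ 4 * \<tau> ^ 2 * (psi \<sigma> n p) ^ 2)) \<and>
         (integrable lborel (\<lambda>p. (deriv (psi \<sigma> n) p) ^ 2)) \<and>
         (\<forall>\<tau>::real. area \<alpha> hb \<sigma> n 0 \<le> area \<alpha> hb \<sigma> n \<tau>) \<and>
         (area \<alpha> hb \<sigma> n 0 = 4 * pi * hb ^ 2 / \<sigma> ^ 2 * ((4 * real n - 1) / (4 * real n - 2))) \<and>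
         (complex_of_real (area \<alpha> hb \<sigma> n 0) = 4 * pi * variance_a hb \<sigma> n) \<and>
         (expect_a hb \<sigma> n = 0) \<and>
         (variance_a hb \<sigma> n = complex_of_real ((hb / \<sigma> * sqrt ((4 * real n - 1) / (4 * real n - 2))) ^ 2))"
proof -
  let ?R = "(4 * real n - 1) / (4 * real n - 2)"
  have "?R \<ge> 0"
    using assms(4) by simp
  then have sqrt_sq: "(hb / \<sigma> * sqrt ?R) ^ 2 = hb ^ 2 / \<sigma> ^ 2 * ?R"
    by (simp add: power_mult_distrib power_divide)
  show ?thesis
  proof (intro conjI allI)
    show "(\<integral>p. psi \<sigma> n p ^ 2 \<partial>lborel) = 1"
      using has_bochner_integral_psi_square[OF assms(3)] by (rule has_bochner_integral_integral_eq)
    show "integrable lborel (\<lambda>p. \<alpha> ^ 4 / p ^ 4 * \<tau> ^ 2 * psi \<sigma> n p ^ 2)" for \<tau>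
      using assms(3,4) by (rule integrable_psi_square_div_p4)
    show "integrable lborel (\<lambda>p. deriv (psi \<sigma> n) p ^ 2)"
      using has_bochner_integral_deriv_psi_square[OF assms(3,4)] by (rule integrable.intros)
    show "area \<alpha> hb \<sigma> n 0 \<le> area \<alpha> hb \<sigma> n \<tau>" for \<tau>
      by (rule area_0_le)
    show "area \<alpha> hb \<sigma> n 0 = 4 * pi * hb ^ 2 / \<sigma> ^ 2 * ?R"
      using assms(3,4) by (rule area_0)
    show "complex_of_real (area \<alpha> hb \<sigma> n 0) = 4 * pi * variance_a hb \<sigma> n"
      unfolding area_0[OF assms(3,4)] variance_a_eq[OF assms(3,4)] by simp
    show "expect_a hb \<sigma> n = 0"
      using assms(3,4) by (rule expect_a_eq_0)
    show "variance_a hb \<sigma> n = complex_of_real ((hb / \<sigma> * sqrt ?R) ^ 2)"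
      unfolding variance_a_eq[OF assms(3,4)] sqrt_sq ..
  qed
qed

end
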